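(* Let $\mathcal{A}$ be the Bose--Mesner algebra of a symmetric association scheme with adjacency matrices $A_0=I,A_1,\dots,A_d$ of size $n$ and first eigenmatrix $P=(P_{i,j})_{0\leq i,j\leq d}$. For indeterminates $X_{i,j}$ ($0\leq i<j\leq d$) define \[ e_k=\sum_{0\leq i<j\leq d}P_{k,i}P_{k,j}X_{i,j}+\sum_{i=0}^dP_{k,i}^2-n\qquad(k=1,\dots,d). \] Let $w_0,\dots,w_d$ be nonzero complex numbers and $a_{i,j}$ ($0\leq i,j\leq d$, $i\neq j$) complex numbers with $\frac{w_j}{w_i}+\frac{w_i}{w_j}=a_{i,j}$ for all $i\neq j$. Let $W=\sum_{j=0}^dw_jA_j$. Then the following are equivalent: (i) $W$ is a type-II matrix; (ii) $(a_{i,j})_{0\leq i<j\leq d}$ is a common zero of $e_1,\dots,e_d$. Moreover, if one of these holds, $a_{i,j}\in\mathbb{R}$ for all $0\leq i<j\leq d$, and $-2<a_{i_0,i_1}<2$ for some $0\leq i_0<i_1\leq d$, then $W$ is a scalar multiple of a complex Hadamard matrix.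
   Context: A symmetric association scheme with adjacency matrices $A_0=I,A_1,\dots,A_d$ means: the $A_i$ are symmetric $n\times n$ $(0,1)$-matrices summing to the all-ones matrix $J$, and their span $\mathcal{A}$ (the Bose--Mesner algebra) is closed under multiplication; $\mathcal{A}$ has primitive idempotents $E_0=\frac1nJ,E_1,\dots,E_d$, and the first eigenmatrix $P$ is defined by $A_j=\sum_{i}P_{i,j}E_i$. A type-II matrix is an $n\times n$ matrix $W$ with nonzero complex entries with $W(W^{(-)})^\top=nI$, $W^{(-)}$ the entrywise inverse. A complex Hadamard matrix is an $n\times n$ complex matrix $H$ with all entries of absolute value $1$ and $HH^*=nI$. *)

theory Defs
  imports "HOL-Analysis.Analysis"
begin

text \<open>Matrices are complex n x n matrices indexed by a finite type 'n (n = CARD('n)).\<close>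

definition cmul :: "complex \<Rightarrow> complex^'n^'m \<Rightarrow> complex^'n^'m" where
  "cmul c M = (\<chi> i j. c * M$i$j)"

definition allones :: "complex^'n^'m" where
  "allones = (\<chi> i j. 1)"

definition entry_inv :: "complex^'n^'m \<Rightarrow> complex^'n^'m" where
  "entry_inv M = (\<chi> i j. inverse (M$i$j))"

definition conj_transpose :: "complex^'n^'m \<Rightarrow> complex^'m^'n" where
  "conj_transpose M = (\<chi> i j. cnj (M$j$i))"

definition bm_algebra :: "(nat \<Rightarrow> complex^'n^'n) \<Rightarrow> nat \<Rightarrow> (complex^'n^'n) set" where
  "bm_algebra A d = {M. \<exists>c. M = (\<Sum>j\<le>d. cmul (c j) (A j))}"

definition symmetric_assoc_scheme :: "(nat \<Rightarrow> complex^'n::finite^'n) \<Rightarrow> nat \<Rightarrow> bool" where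
  "symmetric_assoc_scheme A d \<longleftrightarrow>
     A 0 = mat 1 \<and>
     (\<forall>i\<le>d. transpose (A i) = A i \<and> A i \<noteq> 0 \<and> (\<forall>r s. A i $ r $ s \<in> {0, 1})) \<and>
     (\<Sum>i\<le>d. A i) = allones \<and>
     (\<forall>i\<le>d. \<forall>j\<le>d. A i ** A j \<in> bm_algebra A d)"

definition primitive_idempotent :: "(complex^'n::finite^'n) set \<Rightarrow> complex^'n^'n \<Rightarrow> bool" where
  "primitive_idempotent S E \<longleftrightarrow>
     E \<in> S \<and> E ** E = E \<and> E \<noteq> 0 \<and>
     \<not> (\<exists>F\<in>S. \<exists>G\<in>S. F ** F = F \<and> G ** G = G \<and> F \<noteq> 0 \<and> G \<noteq> 0 \<and>
            F ** G = 0 \<and> G ** F = 0 \<and> E = F + G)"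

definition first_eigenmatrix ::
  "(nat \<Rightarrow> complex^'n::finite^'n) \<Rightarrow> nat \<Rightarrow> (nat \<Rightarrow> nat \<Rightarrow> complex) \<Rightarrow> bool" where
  "first_eigenmatrix A d P \<longleftrightarrow>
     (\<exists>E :: nat \<Rightarrow> complex^'n^'n.
        E 0 = cmul (1 / of_nat CARD('n)) allones \<and>
        inj_on E {..d} \<and>
        E ` {..d} = {F. primitive_idempotent (bm_algebra A d) F} \<and>
        (\<forall>j\<le>d. A j = (\<Sum>i\<le>d. cmul (P i j) (E i))))"

definition type_II :: "complex^'n::finite^'n \<Rightarrow> bool" where
  "type_II W \<longleftrightarrow> (\<forall>i j. W$i$j \<noteq> 0) \<and>
     W ** transpose (entry_inv W) = mat (of_nat CARD('n))"

definition complex_hadamard :: "complex^'n::finite^'n \<Rightarrow> bool" where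
  "complex_hadamard H \<longleftrightarrow> (\<forall>i j. norm (H$i$j) = 1) \<and>
     H ** conj_transpose H = mat (of_nat CARD('n))"

text \<open>The polynomial e_k evaluated at the point x (x i j for 0 <= i < j <= d).\<close>
definition e_poly :: "(nat \<Rightarrow> nat \<Rightarrow> complex) \<Rightarrow> nat \<Rightarrow> nat \<Rightarrow> nat \<Rightarrow> (nat \<Rightarrow> nat \<Rightarrow> complex) \<Rightarrow> complex" where
  "e_poly P d n k x =
     (\<Sum>i\<le>d. \<Sum>j\<in>{i<..d}. P k i * P k j * x i j) + (\<Sum>i\<le>d. (P k i)^2) - of_nat n"

end

theory Submission
  imports Defs
begin

text \<open>
  The primitive idempotents E_k are pairwise orthogonal and sum to I, and
  A_i A_j = sum_k P_ki P_kj E_k. The entrywise inverse of W = sum_j w_j A_j is the symmetric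
  matrix sum_i w_i^-1 A_i, so W (W^(-))^T = sum_k lambda_k E_k with
  lambda_k = sum_i,j (w_j/w_i) P_ki P_kj = e_k(a) + n. Hence W is type II iff lambda_k = n for
  all k, and lambda_0 = n comes for free because every diagonal entry of W (W^(-))^T equals n.

  If t + 1/t is real then t is real or |t| = 1, and a real t gives |t + 1/t| >= 2. So w_i1/w_i0
  is not real and |w_i1| = |w_i0|. Every other w_j has the same modulus: otherwise w_j/w_i0 and
  w_j/w_i1 would both be real, and so would their quotient w_i1/w_i0. Finally, a type-II matrix
  whose entries all have modulus |c| is c times a complex Hadamard matrix.
\<close>

lemma cmul_component [simp]: "cmul c M $ i $ j = c * M $ i $ j"
  by (simp add: cmul_def)

lemma cmul_1 [simp]: "cmul 1 X = X"
  by (simp add: vec_eq_iff)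

lemma cmul_0_left [simp]: "cmul 0 X = 0"
  by (simp add: vec_eq_iff)

lemma cmul_0_right [simp]: "cmul c 0 = 0"
  by (simp add: vec_eq_iff)

lemma cmul_cmul [simp]: "cmul c (cmul e X) = cmul (c * e) X"
  by (simp add: vec_eq_iff)

lemma cmul_sum_right: "cmul c (\<Sum>i\<in>I. X i) = (\<Sum>i\<in>I. cmul c (X i))"
  by (simp add: vec_eq_iff sum_distrib_left)

lemma cmul_sum_left: "cmul (\<Sum>i\<in>I. f i) X = (\<Sum>i\<in>I. cmul (f i) X)"
  by (simp add: vec_eq_iff sum_distrib_right)

lemma cmul_add_left: "cmul (c + e) X = cmul c X + cmul e X"
  by (simp add: vec_eq_iff algebra_simps)

lemma cmul_diff_left: "cmul (c - e) X = cmul c X - cmul e X"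
  by (simp add: vec_eq_iff algebra_simps)

lemma cmul_right_cancel:
  assumes "cmul c X = cmul e X" and "X \<noteq> 0"
  shows "c = e"
proof -
  obtain i j where "X $ i $ j \<noteq> 0"
    using assms(2) by (metis vec_eq_iff zero_index)
  with assms(1) show ?thesis
    by (metis cmul_component mult_cancel_right)
qed

lemma transpose_sum: "transpose (\<Sum>i\<in>I. X i) = (\<Sum>i\<in>I. transpose (X i))"
  by (simp add: vec_eq_iff transpose_def)

lemma transpose_cmul: "transpose (cmul c X) = cmul c (transpose X)"
  by (simp add: vec_eq_iff transpose_def)

lemma matrix_mult_cmul_left: "cmul c X ** Y = cmul c (X ** Y)"
  by (simp add: vec_eq_iff matrix_matrix_mult_def sum_distrib_left mult.assoc)

lemma matrix_mult_cmul_right: "X ** cmul c Y = cmul c (X ** Y)"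
  by (simp add: vec_eq_iff matrix_matrix_mult_def sum_distrib_left mult_ac)

lemma matrix_mult_sum_left: "(\<Sum>i\<in>I. X i) ** Y = (\<Sum>i\<in>I. X i ** Y)"
  by (simp add: vec_eq_iff matrix_matrix_mult_def sum_distrib_right sum.swap[of _ I])

lemma matrix_mult_sum_right: "Y ** (\<Sum>i\<in>I. X i) = (\<Sum>i\<in>I. Y ** X i)"
  by (simp add: vec_eq_iff matrix_matrix_mult_def sum_distrib_left sum.swap[of _ I])

lemma matrix_mult_diff_left: "(X - Z) ** (Y :: complex^'n::finite^'n) = X ** Y - Z ** Y"
  by (simp add: vec_eq_iff matrix_matrix_mult_def algebra_simps sum_subtractf)

lemma matrix_mult_diff_right: "(Y :: complex^'n::finite^'n) ** (X - Z) = Y ** X - Y ** Z"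
  by (simp add: vec_eq_iff matrix_matrix_mult_def algebra_simps sum_subtractf)

lemma mat_matrix_mult: "mat c ** X = cmul c (X :: complex^'n::finite^'n)"
  by (simp add: vec_eq_iff matrix_matrix_mult_def mat_def if_distrib if_distribR cong: if_cong)

lemma primitive_idempotent_mult_cases:
  assumes mult_closed: "\<And>X Y. X \<in> S \<Longrightarrow> Y \<in> S \<Longrightarrow> X ** Y \<in> S"
    and diff_closed: "\<And>X Y. X \<in> S \<Longrightarrow> Y \<in> S \<Longrightarrow> X - Y \<in> S"
    and commute: "\<And>X Y. X \<in> S \<Longrightarrow> Y \<in> S \<Longrightarrow> X ** Y = Y ** X"
    and E: "primitive_idempotent S E" and F: "primitive_idempotent S F"
  shows "E ** F = 0 \<or> E ** F = E"
proof -
  have "E \<in> S" "E ** E = E" "F \<in> S" "F ** F = F"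
    using E F unfolding primitive_idempotent_def by blast+
  define G where "G = E ** F"
  have "G \<in> S" "E - G \<in> S"
    using \<open>E \<in> S\<close> \<open>F \<in> S\<close> by (simp_all add: G_def mult_closed diff_closed)
  have EG: "E ** G = G"
    by (simp add: G_def matrix_mul_assoc \<open>E ** E = E\<close>)
  have GE: "G ** E = G"
    using EG commute[OF \<open>G \<in> S\<close> \<open>E \<in> S\<close>] by simp
  have GG: "G ** G = G"
    by (metis G_def GE \<open>F ** F = F\<close> matrix_mul_assoc)
  \<comment> \<open>E = (E - EF) + EF is a decomposition into orthogonal idempotents of S\<close>
  have "(E - G) ** (E - G) = E - G" "(E - G) ** G = 0" "G ** (E - G) = 0"
    by (simp_all add: matrix_mult_diff_left matrix_mult_diff_right \<open>E ** E = E\<close> EG GE GG)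
  with E \<open>G \<in> S\<close> \<open>E - G \<in> S\<close> GG have "E - G = 0 \<or> G = 0"
    unfolding primitive_idempotent_def by (metis diff_add_cancel)
  then show ?thesis
    by (auto simp: G_def)
qed

lemma diag_mult_transpose_entry_inv:
  fixes W :: "complex^'n::finite^'n"
  assumes "\<forall>i j. W $ i $ j \<noteq> 0"
  shows "(W ** transpose (entry_inv W)) $ r $ r = of_nat CARD('n)"
  using assms by (simp add: matrix_matrix_mult_def transpose_def entry_inv_def)

lemma type_II_unimodular_hadamard:
  fixes W :: "complex^'n::finite^'n"
  assumes "type_II W" and "c \<noteq> 0" and norm_W: "\<forall>i j. norm (W $ i $ j) = norm c"
  shows "complex_hadamard (cmul (inverse c) W)"
proof -
  define H where "H = cmul (inverse c) W"
  have norm_H: "norm (H $ i $ j) = 1" for i j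
    using norm_W \<open>c \<noteq> 0\<close> by (simp add: H_def norm_mult norm_inverse)
  \<comment> \<open>on the unit circle, conjugation is inversion\<close>
  have cnj_H: "cnj (H $ i $ j) = c * inverse (W $ i $ j)" for i j
  proof -
    have "H $ i $ j * cnj (H $ i $ j) = 1"
      using complex_norm_square[of "H $ i $ j"] norm_H[of i j] by simp
    moreover have "W $ i $ j \<noteq> 0"
      using norm_W \<open>c \<noteq> 0\<close> by (metis norm_eq_zero)
    ultimately show ?thesis
      using \<open>c \<noteq> 0\<close> by (auto simp: H_def field_simps)
  qed
  have "H $ i $ k * cnj (H $ j $ k) = W $ i $ k * inverse (W $ j $ k)" for i j k
    using \<open>c \<noteq> 0\<close> unfolding cnj_H by (simp add: H_def)
  then have "H ** conj_transpose H = W ** transpose (entry_inv W)"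
    by (simp add: vec_eq_iff matrix_matrix_mult_def conj_transpose_def transpose_def entry_inv_def)
  then show ?thesis
    using \<open>type_II W\<close> norm_H by (simp add: complex_hadamard_def type_II_def H_def)
qed

lemma abs_add_inverse_ge_two:
  fixes r :: real
  assumes "r \<noteq> 0"
  shows "2 \<le> \<bar>r + inverse r\<bar>"
proof -
  have "0 \<le> (\<bar>r\<bar> - 1)\<^sup>2"
    by simp
  then have "2 * \<bar>r\<bar> \<le> \<bar>r\<bar> * \<bar>r + inverse r\<bar>"
    using assms by (simp add: power2_eq_square algebra_simps distrib_left flip: abs_mult)
  then show ?thesis
    using assms by simp
qed

lemma not_real_if_abs_Re_add_inverse_less_two:
  fixes t :: complex
  assumes "t \<noteq> 0" and "\<bar>Re (t + inverse t)\<bar> < 2"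
  shows "t \<notin> \<real>"
proof
  assume "t \<in> \<real>"
  then obtain r where "t = of_real r"
    by (auto elim: Reals_cases)
  with assms abs_add_inverse_ge_two[of r] show False
    by (simp flip: of_real_inverse)
qed

lemma real_or_unimodular_if_add_inverse_real:
  fixes t :: complex
  assumes "t \<noteq> 0" and "t + inverse t \<in> \<real>"
  shows "t \<in> \<real> \<or> norm t = 1"
proof -
  have "Im t * (1 - 1 / ((Re t)\<^sup>2 + (Im t)\<^sup>2)) = 0"
    using assms(2) by (simp add: complex_is_Real_iff power2_eq_square algebra_simps)
  then have "Im t = 0 \<or> (Re t)\<^sup>2 + (Im t)\<^sup>2 = 1"
    by auto
  then show ?thesis
    by (auto simp: complex_is_Real_iff norm_complex_def)
qed

lemma norms_eq_if_ratio_sums_real: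
  fixes w :: "'a \<Rightarrow> complex"
  assumes nonzero: "\<forall>j\<in>I. w j \<noteq> 0"
    and real_sums: "\<forall>i\<in>I. \<forall>j\<in>I. i \<noteq> j \<longrightarrow> w j / w i + w i / w j \<in> \<real>"
    and "i0 \<in> I" "i1 \<in> I" and Re_sum: "\<bar>Re (w i1 / w i0 + w i0 / w i1)\<bar> < 2"
    and "j \<in> I"
  shows "norm (w j) = norm (w i0)"
proof -
  have nonreal: "w i1 / w i0 \<notin> \<real>"
    using not_real_if_abs_Re_add_inverse_less_two[of "w i1 / w i0"] nonzero Re_sum
      \<open>i0 \<in> I\<close> \<open>i1 \<in> I\<close>
    by simp
  have real_or_norm_eq: "w j / w i \<in> \<real> \<or> norm (w j) = norm (w i)"
    if "i \<in> I" "j \<in> I" for i j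
  proof (cases "i = j")
    case False
    have "w j / w i + inverse (w j / w i) \<in> \<real>"
      using real_sums that False by (simp add: inverse_eq_divide)
    with nonzero that show ?thesis
      using real_or_unimodular_if_add_inverse_real[of "w j / w i"] by (auto simp: norm_divide)
  qed simp
  have "norm (w i1) = norm (w i0)"
    using real_or_norm_eq[OF \<open>i0 \<in> I\<close> \<open>i1 \<in> I\<close>] nonreal by blast
  show ?thesis
  proof (rule ccontr)
    assume "norm (w j) \<noteq> norm (w i0)"
    then have "w j / w i0 \<in> \<real>" "w j / w i1 \<in> \<real>"
      using real_or_norm_eq \<open>norm (w i1) = norm (w i0)\<close> \<open>i0 \<in> I\<close> \<open>i1 \<in> I\<close> \<open>j \<in> I\<close>
      by metis+
    moreover have "w i1 / w i0 = (w j / w i0) / (w j / w i1)"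
      using nonzero \<open>i1 \<in> I\<close> \<open>j \<in> I\<close> by (simp add: field_simps)
    ultimately show False
      using nonreal by (metis Reals_divide)
  qed
qed

lemma ratio_sums_real_if_upper_real:
  assumes a_def: "\<forall>i\<le>d. \<forall>j\<le>d. i \<noteq> j \<longrightarrow> w j / w i + w i / w j = a i j"
    and real: "\<forall>i j. i < j \<and> j \<le> (d::nat) \<longrightarrow> a i j \<in> \<real>"
    and "i \<le> d" "j \<le> d" "i \<noteq> j"
  shows "w j / w i + w i / w j \<in> \<real>"
proof -
  have "a i j = a j i"
    using a_def assms(3-5) by (metis add.commute)
  then have "a i j \<in> \<real>"
    using real assms(3-5) by (metis linorder_neqE_nat)
  then show ?thesis
    using a_def assms(3-5) by simp
qed

lemma sum_square_split_diag:
  "(\<Sum>i\<le>(d::nat). \<Sum>j\<le>d. f i j) =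
     (\<Sum>i\<le>d. f i i) + (\<Sum>i\<le>d. \<Sum>j\<in>{i<..d}. f i j + f j i :: 'a::comm_monoid_add)"
proof (induction d)
  case (Suc d)
  have "{i<..Suc d} = insert (Suc d) {i<..d}" if "i \<le> d" for i
    using that by auto
  then show ?case
    by (simp add: Suc.IH sum.distrib ac_simps)
qed simp

text \<open>The eigenvalue lambda_k of W (W^(-))^T on E_k, for W = sum_j w_j A_j.\<close>
definition ratio_eigenvalue ::
    "(nat \<Rightarrow> nat \<Rightarrow> complex) \<Rightarrow> nat \<Rightarrow> (nat \<Rightarrow> complex) \<Rightarrow> nat \<Rightarrow> complex"
  where "ratio_eigenvalue P d w k = (\<Sum>i\<le>d. \<Sum>j\<le>d. w j / w i * P k i * P k j)"

lemma ratio_eigenvalue_eq_e_poly: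
  assumes nonzero: "\<forall>j\<le>d. w j \<noteq> 0"
    and a_def: "\<forall>i\<le>d. \<forall>j\<le>d. i \<noteq> j \<longrightarrow> w j / w i + w i / w j = a i j"
  shows "ratio_eigenvalue P d w k = e_poly P d n k a + of_nat n"
proof -
  have "ratio_eigenvalue P d w k =
      (\<Sum>i\<le>d. w i / w i * P k i * P k i) +
      (\<Sum>i\<le>d. \<Sum>j\<in>{i<..d}. w j / w i * P k i * P k j + w i / w j * P k j * P k i)"
    unfolding ratio_eigenvalue_def by (rule sum_square_split_diag)
  also have "\<dots> = (\<Sum>i\<le>d. (P k i)\<^sup>2) + (\<Sum>i\<le>d. \<Sum>j\<in>{i<..d}. P k i * P k j * a i j)"
  proof -
    have "w j / w i * P k i * P k j + w i / w j * P k j * P k i = P k i * P k j * a i j"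
      if "i < j" "j \<le> d" for i j
    proof -
      have "w j / w i * P k i * P k j + w i / w j * P k j * P k i =
          (w j / w i + w i / w j) * (P k i * P k j)"
        by (simp add: algebra_simps)
      with a_def that show ?thesis
        by (simp add: mult.commute)
    qed
    then show ?thesis
      using nonzero by (intro arg_cong2[where f = "(+)"] sum.cong refl) (auto simp: power2_eq_square)
  qed
  finally show ?thesis
    by (simp add: e_poly_def)
qed

locale bose_mesner =
  fixes A :: "nat \<Rightarrow> complex^'n::finite^'n" and d :: nat
  assumes scheme: "symmetric_assoc_scheme A d"
begin

abbreviation BM where "BM \<equiv> bm_algebra A d"

lemma combination_in_BM: "(\<Sum>j\<le>d. cmul (c j) (A j)) \<in> BM"
  unfolding bm_algebra_def by blast

lemma A_0: "A 0 = mat 1"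
  using scheme by (simp add: symmetric_assoc_scheme_def)

lemma A_symmetric: "i \<le> d \<Longrightarrow> transpose (A i) = A i"
  using scheme by (simp add: symmetric_assoc_scheme_def)

lemma A_in_BM: "i \<le> d \<Longrightarrow> A i \<in> BM"
  unfolding bm_algebra_def
  by (rule CollectI, rule exI[of _ "\<lambda>j. if j = i then 1 else 0"])
     (simp add: if_distrib[of "\<lambda>c. cmul c _"] sum.delta cong: if_cong)

lemma BM_symmetric: "X \<in> BM \<Longrightarrow> transpose X = X"
  by (auto simp: bm_algebra_def transpose_sum transpose_cmul A_symmetric intro!: sum.cong)

lemma BM_diff: "X \<in> BM \<Longrightarrow> Y \<in> BM \<Longrightarrow> X - Y \<in> BM"
proof -
  assume "X \<in> BM" "Y \<in> BM"
  then obtain c e where "X = (\<Sum>j\<le>d. cmul (c j) (A j))" "Y = (\<Sum>j\<le>d. cmul (e j) (A j))"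
    by (auto simp: bm_algebra_def)
  then have "X - Y = (\<Sum>j\<le>d. cmul (c j - e j) (A j))"
    by (simp add: cmul_diff_left sum_subtractf)
  then show ?thesis
    by (simp add: combination_in_BM)
qed

lemma BM_sum_cmul:
  "finite I \<Longrightarrow> (\<And>i. i \<in> I \<Longrightarrow> X i \<in> BM) \<Longrightarrow> (\<Sum>i\<in>I. cmul (c i) (X i)) \<in> BM"
proof (induction I rule: finite_induct)
  case empty
  show ?case
    using combination_in_BM[of "\<lambda>_. 0"] by simp
next
  case (insert i I)
  obtain e where e: "X i = (\<Sum>j\<le>d. cmul (e j) (A j))"
    using insert.prems by (auto simp: bm_algebra_def)
  obtain f where f: "(\<Sum>i\<in>I. cmul (c i) (X i)) = (\<Sum>j\<le>d. cmul (f j) (A j))"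
    using insert by (auto simp: bm_algebra_def)
  have "(\<Sum>i\<in>insert i I. cmul (c i) (X i)) = (\<Sum>j\<le>d. cmul (c i * e j + f j) (A j))"
    using insert.hyps by (simp add: e f cmul_add_left cmul_sum_right sum.distrib)
  then show ?case
    by (simp add: combination_in_BM)
qed

lemma BM_mult: "X \<in> BM \<Longrightarrow> Y \<in> BM \<Longrightarrow> X ** Y \<in> BM"
proof -
  assume "X \<in> BM" "Y \<in> BM"
  then obtain c e where "X = (\<Sum>i\<le>d. cmul (c i) (A i))" "Y = (\<Sum>j\<le>d. cmul (e j) (A j))"
    by (auto simp: bm_algebra_def)
  then have "X ** Y = (\<Sum>j\<le>d. cmul (e j) (\<Sum>i\<le>d. cmul (c i) (A i ** A j)))"
    by (simp add: matrix_mult_sum_left matrix_mult_sum_right matrix_mult_cmul_left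
        matrix_mult_cmul_right)
  also have "\<dots> \<in> BM"
    using scheme by (intro BM_sum_cmul) (auto simp: symmetric_assoc_scheme_def)
  finally show ?thesis .
qed

text \<open>XY = (XY)^T = Y^T X^T = YX, since every element of BM is symmetric.\<close>
lemma BM_commute: "X \<in> BM \<Longrightarrow> Y \<in> BM \<Longrightarrow> X ** Y = Y ** X"
  by (metis BM_mult BM_symmetric matrix_transpose_mul)

lemma primitive_idempotents_orthogonal:
  assumes E: "primitive_idempotent BM E" and F: "primitive_idempotent BM F" and "E \<noteq> F"
  shows "E ** F = 0"
proof -
  have cases: "E' ** F' = 0 \<or> E' ** F' = E'"
    if "primitive_idempotent BM E'" "primitive_idempotent BM F'" for E' F'
    by (rule primitive_idempotent_mult_cases[where S = BM]) (fact BM_mult BM_diff BM_commute that)+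
  have "E ** F = 0 \<or> E ** F = E" "F ** E = 0 \<or> F ** E = F"
    using cases E F by blast+
  moreover have "F ** E = E ** F"
    using E F BM_commute unfolding primitive_idempotent_def by blast
  ultimately show ?thesis
    using \<open>E \<noteq> F\<close> by auto
qed

lemma A_entry_unique: "\<exists>i0\<le>d. \<forall>i\<le>d. A i $ r $ s = (if i = i0 then 1 else 0)"
proof -
  define K where "K = {i\<in>{..d}. A i $ r $ s = 1}"
  have zero_one: "i \<le> d \<Longrightarrow> A i $ r $ s = 0 \<or> A i $ r $ s = 1" for i
    using scheme by (auto simp: symmetric_assoc_scheme_def)
  have "1 = (\<Sum>i\<le>d. A i $ r $ s)"
    using scheme by (simp add: symmetric_assoc_scheme_def vec_eq_iff allones_def flip: sum_component)
  also have "\<dots> = (\<Sum>i\<le>d. if i \<in> K then 1 else 0)"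
    using zero_one by (intro sum.cong) (force simp: K_def)+
  also have "\<dots> = of_nat (card K)"
    by (simp add: sum.If_cases K_def Int_def conj_commute)
  finally obtain i0 where "K = {i0}"
    by (metis card_1_singletonE of_nat_eq_1_iff)
  then show ?thesis
    using zero_one by (auto simp: K_def set_eq_iff intro!: exI[of _ i0])
qed

lemma combination_entry: "\<exists>i\<le>d. \<forall>f. (\<Sum>j\<le>d. cmul (f j) (A j)) $ r $ s = f i"
proof -
  obtain i where "i \<le> d" and A_rs: "\<forall>j\<le>d. A j $ r $ s = (if j = i then 1 else 0)"
    using A_entry_unique by blast
  have "(\<Sum>j\<le>d. cmul (f j) (A j)) $ r $ s = (\<Sum>j\<le>d. if j = i then f j else 0)" for f
    unfolding sum_component cmul_component using A_rs by (intro sum.cong) auto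
  with \<open>i \<le> d\<close> show ?thesis
    by auto
qed

lemma combination_hadamard:
  assumes "type_II (\<Sum>j\<le>d. cmul (w j) (A j))" and nonzero: "\<forall>j\<le>d. w j \<noteq> 0"
    and real_sums: "\<forall>i\<le>d. \<forall>j\<le>d. i \<noteq> j \<longrightarrow> w j / w i + w i / w j \<in> \<real>"
    and "i0 \<le> d" "i1 \<le> d" and Re_sum: "\<bar>Re (w i1 / w i0 + w i0 / w i1)\<bar> < 2"
  shows "complex_hadamard (cmul (inverse (w i0)) (\<Sum>j\<le>d. cmul (w j) (A j)))"
proof (rule type_II_unimodular_hadamard)
  have norm_w: "norm (w j) = norm (w i0)" if "j \<le> d" for j
    by (rule norms_eq_if_ratio_sums_real[of "{..d}"]) (use assms that in simp_all)
  show "\<forall>r s. norm ((\<Sum>j\<le>d. cmul (w j) (A j)) $ r $ s) = norm (w i0)"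
  proof (intro allI)
    fix r s
    obtain i where "i \<le> d" "\<forall>f. (\<Sum>j\<le>d. cmul (f j) (A j)) $ r $ s = f i"
      using combination_entry by blast
    then show "norm ((\<Sum>j\<le>d. cmul (w j) (A j)) $ r $ s) = norm (w i0)"
      by (simp add: norm_w)
  qed
  show "type_II (\<Sum>j\<le>d. cmul (w j) (A j))" "w i0 \<noteq> 0"
    using assms by simp_all
qed

end

locale bose_mesner_eigen = bose_mesner A d for A :: "nat \<Rightarrow> complex^'n::finite^'n" and d +
  fixes P :: "nat \<Rightarrow> nat \<Rightarrow> complex" and E :: "nat \<Rightarrow> complex^'n^'n"
  assumes E_0: "E 0 = cmul (1 / of_nat CARD('n)) allones"
    and E_inj: "inj_on E {..d}"
    and E_image: "E ` {..d} = {F. primitive_idempotent (bm_algebra A d) F}"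
    and A_eq_E_combination: "\<forall>j\<le>d. A j = (\<Sum>i\<le>d. cmul (P i j) (E i))"
begin

lemma E_primitive: "k \<le> d \<Longrightarrow> primitive_idempotent BM (E k)"
  using E_image by auto

lemma E_nonzero: "k \<le> d \<Longrightarrow> E k \<noteq> 0"
  using E_primitive by (simp add: primitive_idempotent_def)

lemma E_mult_E:
  assumes "k \<le> d" "l \<le> d"
  shows "E k ** E l = (if k = l then E k else 0)"
proof (cases "k = l")
  case True
  then show ?thesis
    using E_primitive[OF \<open>k \<le> d\<close>] by (simp add: primitive_idempotent_def)
next
  case False
  then have "E k \<noteq> E l"
    using E_inj assms by (auto dest: inj_onD)
  with False show ?thesis
    using primitive_idempotents_orthogonal E_primitive assms by simp
qed

lemma E_combination_mult_E:
  assumes "l \<le> d"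
  shows "(\<Sum>k\<le>d. cmul (c k) (E k)) ** E l = cmul (c l) (E l)"
proof -
  have "(\<Sum>k\<le>d. cmul (c k) (E k)) ** E l = (\<Sum>k\<le>d. if k = l then cmul (c k) (E k) else 0)"
    unfolding matrix_mult_sum_left matrix_mult_cmul_left
    by (intro sum.cong) (simp_all add: E_mult_E assms)
  also have "\<dots> = cmul (c l) (E l)"
    using assms by simp
  finally show ?thesis .
qed

lemma A_mult_E: "j \<le> d \<Longrightarrow> l \<le> d \<Longrightarrow> A j ** E l = cmul (P l j) (E l)"
  using A_eq_E_combination E_combination_mult_E by simp

lemma P_0: "l \<le> d \<Longrightarrow> P l 0 = 1"
  using A_mult_E[of 0 l] A_0 E_nonzero cmul_right_cancel[of "P l 0" "E l" 1] by simp

lemma E_sum: "(\<Sum>k\<le>d. E k) = mat 1"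
proof -
  have "mat 1 = (\<Sum>k\<le>d. cmul (P k 0) (E k))"
    using A_eq_E_combination A_0 by simp
  also have "\<dots> = (\<Sum>k\<le>d. E k)"
    by (intro sum.cong) (simp_all add: P_0)
  finally show ?thesis ..
qed

lemma A_mult_A:
  assumes "i \<le> d" "j \<le> d"
  shows "A i ** A j = (\<Sum>k\<le>d. cmul (P k i * P k j) (E k))"
proof -
  have "A i ** A j = (\<Sum>k\<le>d. cmul (P k j) (A i ** E k))"
    using A_eq_E_combination \<open>j \<le> d\<close>
    by (simp only: matrix_mult_sum_right matrix_mult_cmul_right flip: atMost_iff)
  also have "\<dots> = (\<Sum>k\<le>d. cmul (P k i * P k j) (E k))"
    by (intro sum.cong) (simp_all add: A_mult_E \<open>i \<le> d\<close> mult.commute)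
  finally show ?thesis .
qed

lemma E_combination_eq_mat_iff:
  "(\<Sum>k\<le>d. cmul (c k) (E k)) = mat x \<longleftrightarrow> (\<forall>k\<le>d. c k = x)"
proof
  assume "(\<Sum>k\<le>d. cmul (c k) (E k)) = mat x"
  then have "cmul (c k) (E k) = cmul x (E k)" if "k \<le> d" for k
    using E_combination_mult_E[OF that, of c] by (simp add: mat_matrix_mult)
  then show "\<forall>k\<le>d. c k = x"
    using cmul_right_cancel E_nonzero by blast
next
  assume "\<forall>k\<le>d. c k = x"
  then have "(\<Sum>k\<le>d. cmul (c k) (E k)) = cmul x (\<Sum>k\<le>d. E k)"
    by (simp add: cmul_sum_right)
  then show "(\<Sum>k\<le>d. cmul (c k) (E k)) = mat x"
    by (simp add: E_sum vec_eq_iff mat_def)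
qed

text \<open>Works because E_0 = J/n has nonzero diagonal while sum_k E_k has diagonal 1.\<close>
lemma E_combination_coeff_0:
  assumes "\<forall>k\<in>{1..d}. c k = x" and "(\<Sum>k\<le>d. cmul (c k) (E k)) $ r $ r = x"
  shows "c 0 = x"
proof -
  have split: "{..d} = insert 0 {1..d}"
    by auto
  have "(\<Sum>k\<le>d. E k $ r $ r) = 1"
    using E_sum by (simp add: mat_def flip: sum_component)
  then have diag_rest: "(\<Sum>k\<in>{1..d}. E k $ r $ r) = 1 - E 0 $ r $ r"
    unfolding split by (simp add: algebra_simps)
  have "x = c 0 * E 0 $ r $ r + x * (\<Sum>k\<in>{1..d}. E k $ r $ r)"
    using assms unfolding split by (simp add: sum_distrib_left)
  then have "(c 0 - x) * E 0 $ r $ r = 0"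
    unfolding diag_rest by (auto simp: algebra_simps)
  then show ?thesis
    by (simp add: E_0 allones_def)
qed

lemma combination_mult_inverse_combination:
  "(\<Sum>j\<le>d. cmul (w j) (A j)) ** (\<Sum>i\<le>d. cmul (inverse (w i)) (A i)) =
   (\<Sum>k\<le>d. cmul (ratio_eigenvalue P d w k) (E k))"
proof -
  have "(\<Sum>j\<le>d. cmul (w j) (A j)) ** (\<Sum>i\<le>d. cmul (inverse (w i)) (A i)) =
      (\<Sum>i\<le>d. \<Sum>j\<le>d. cmul (inverse (w i) * w j) (A j ** A i))"
    unfolding matrix_mult_sum_left matrix_mult_cmul_left matrix_mult_sum_right
      matrix_mult_cmul_right cmul_sum_right cmul_cmul ..
  also have "\<dots> = (\<Sum>i\<le>d. \<Sum>j\<le>d. \<Sum>k\<le>d. cmul (w j / w i * P k i * P k j) (E k))"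
    by (intro sum.cong refl) (simp add: A_mult_A cmul_sum_right divide_inverse mult_ac)
  also have "\<dots> = (\<Sum>i\<le>d. \<Sum>k\<le>d. \<Sum>j\<le>d. cmul (w j / w i * P k i * P k j) (E k))"
    by (rule sum.cong[OF refl], rule sum.swap)
  also have "\<dots> = (\<Sum>k\<le>d. \<Sum>i\<le>d. \<Sum>j\<le>d. cmul (w j / w i * P k i * P k j) (E k))"
    by (rule sum.swap)
  also have "\<dots> = (\<Sum>k\<le>d. cmul (ratio_eigenvalue P d w k) (E k))"
    unfolding ratio_eigenvalue_def cmul_sum_left ..
  finally show ?thesis .
qed

lemma type_II_combination_iff:
  assumes nonzero: "\<forall>j\<le>d. w j \<noteq> 0"
  shows "type_II (\<Sum>j\<le>d. cmul (w j) (A j)) \<longleftrightarrow>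
    (\<forall>k\<in>{1..d}. ratio_eigenvalue P d w k = of_nat CARD('n))"
proof -
  define W where "W = (\<Sum>j\<le>d. cmul (w j) (A j))"
  define V where "V = (\<Sum>i\<le>d. cmul (inverse (w i)) (A i))"
  let ?ratio = "ratio_eigenvalue P d w" and ?N = "of_nat CARD('n) :: complex"
  have W_V_entries: "\<exists>i\<le>d. W $ r $ s = w i \<and> V $ r $ s = inverse (w i)" for r s
  proof -
    obtain i where "i \<le> d" "\<forall>f. (\<Sum>j\<le>d. cmul (f j) (A j)) $ r $ s = f i"
      using combination_entry by blast
    then show ?thesis
      unfolding W_def V_def by auto
  qed
  have W_nonzero: "\<forall>r s. W $ r $ s \<noteq> 0"
    using W_V_entries nonzero by (metis nonzero_imp_inverse_nonzero inverse_zero)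
  have "entry_inv W = V"
    using W_V_entries by (metis (mono_tags) vec_eq_iff vec_lambda_beta entry_inv_def)
  moreover have "V \<in> BM"
    unfolding V_def by (intro BM_sum_cmul A_in_BM) auto
  ultimately have W_mult: "W ** transpose (entry_inv W) = (\<Sum>k\<le>d. cmul (?ratio k) (E k))"
    using BM_symmetric combination_mult_inverse_combination unfolding W_def V_def by simp
  have "type_II W \<longleftrightarrow> (\<forall>k\<le>d. ?ratio k = ?N)"
    using W_nonzero W_mult by (simp add: type_II_def E_combination_eq_mat_iff)
  also have "\<dots> \<longleftrightarrow> (\<forall>k\<in>{1..d}. ?ratio k = ?N)"
  proof -
    have "?ratio 0 = ?N" if "\<forall>k\<in>{1..d}. ?ratio k = ?N"
      using E_combination_coeff_0[OF that] diag_mult_transpose_entry_inv[OF W_nonzero] W_mult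
      by simp
    moreover have "k \<in> {1..d}" if "k \<le> d" "k \<noteq> 0" for k
      using that by simp
    ultimately show ?thesis
      by (metis atLeastAtMost_iff)
  qed
  finally show ?thesis
    unfolding W_def .
qed

end

theorem lemma3p2:
  fixes A :: "nat \<Rightarrow> complex^'n::finite^'n"
    and d :: nat
    and P :: "nat \<Rightarrow> nat \<Rightarrow> complex"
    and w :: "nat \<Rightarrow> complex"
    and a :: "nat \<Rightarrow> nat \<Rightarrow> complex"
    and W :: "complex^'n^'n"
  assumes scheme: "symmetric_assoc_scheme A d"
    and eig: "first_eigenmatrix A d P"
    and w_nz: "\<forall>j\<le>d. w j \<noteq> 0"
    and a_def: "\<forall>i\<le>d. \<forall>j\<le>d. i \<noteq> j \<longrightarrow> w j / w i + w i / w j = a i j"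
    and W_def: "W = (\<Sum>j\<le>d. cmul (w j) (A j))"
  shows "(type_II W \<longleftrightarrow> (\<forall>k\<in>{1..d}. e_poly P d CARD('n) k a = 0)) \<and>
         ((type_II W \<and> (\<forall>i j. i < j \<and> j \<le> d \<longrightarrow> a i j \<in> \<real>) \<and>
           (\<exists>i0 i1. i0 < i1 \<and> i1 \<le> d \<and> -2 < Re (a i0 i1) \<and> Re (a i0 i1) < 2))
          \<longrightarrow> (\<exists>c H. complex_hadamard H \<and> W = cmul c H))"
proof -
  interpret bose_mesner A d
    using scheme by unfold_locales
  obtain E where "bose_mesner_eigen A d P E"
    using eig scheme
    unfolding first_eigenmatrix_def bose_mesner_eigen_def bose_mesner_eigen_axioms_def bose_mesner_def
    by blast
  then interpret bose_mesner_eigen A d P E .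
  have "type_II W \<longleftrightarrow> (\<forall>k\<in>{1..d}. e_poly P d CARD('n) k a = 0)"
    using type_II_combination_iff[OF w_nz]
      ratio_eigenvalue_eq_e_poly[OF w_nz a_def, where n = "CARD('n)"]
    unfolding W_def by simp
  moreover have "\<exists>c H. complex_hadamard H \<and> W = cmul c H"
    if "type_II W" and real: "\<forall>i j. i < j \<and> j \<le> d \<longrightarrow> a i j \<in> \<real>"
      and pair: "\<exists>i0 i1. i0 < i1 \<and> i1 \<le> d \<and> -2 < Re (a i0 i1) \<and> Re (a i0 i1) < 2"
  proof -
    obtain i0 i1 where "i0 < i1" "i1 \<le> d" "\<bar>Re (w i1 / w i0 + w i0 / w i1)\<bar> < 2"
      using pair a_def by (auto simp: abs_less_iff)
    then have "complex_hadamard (cmul (inverse (w i0)) W)"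
      using combination_hadamard \<open>type_II W\<close> w_nz ratio_sums_real_if_upper_real[OF a_def real]
      unfolding W_def by simp
    moreover have "W = cmul (w i0) (cmul (inverse (w i0)) W)"
      using w_nz \<open>i0 < i1\<close> \<open>i1 \<le> d\<close> by simp
    ultimately show ?thesis
      by blast
  qed
  ultimately show ?thesis
    by blast
qed

end
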